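(* Let $G$ be a finitely generated, residually finite group and $H<G$ a subgroup of finite index. If every finite quotient of $H$ is also a quotient of $G$, then there is a continuous surjection $\widehat{G}\twoheadrightarrow\widehat{H}$ with finite kernel.
   Context: $\widehat{G}$ denotes the profinite completion of $G$, i.e. the inverse limit of the finite quotients of $G$. *)

theory Defs
  imports "HOL-Algebra.Algebra" "HOL-Analysis.Function_Topology"
begin

definition fin_generated :: "('a, 'b) monoid_scheme \<Rightarrow> bool" where
  "fin_generated G \<longleftrightarrow> (\<exists>S. finite S \<and> S \<subseteq> carrier G \<and> generate G S = carrier G)"

definition fin_index_normals :: "('a, 'b) monoid_scheme \<Rightarrow> 'a set set" where
  "fin_index_normals G = {N. N \<lhd> G \<and> finite (rcosets\<^bsub>G\<^esub> N)}"

definition residually_finite :: "('a, 'b) monoid_scheme \<Rightarrow> bool" where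
  "residually_finite G \<longleftrightarrow>
     (\<forall>g\<in>carrier G. g \<noteq> \<one>\<^bsub>G\<^esub> \<longrightarrow> (\<exists>N\<in>fin_index_normals G. g \<notin> N))"

text \<open>Profinite completion: the inverse limit of the finite quotients G/N,
  realised as compatible families of cosets (x N \<in> G/N), extensional outside
  the index set.\<close>
definition profinite_carrier :: "('a, 'b) monoid_scheme \<Rightarrow> ('a set \<Rightarrow> 'a set) set" where
  "profinite_carrier G =
     {x \<in> (\<Pi>\<^sub>E N\<in>fin_index_normals G. rcosets\<^bsub>G\<^esub> N).
        \<forall>N\<in>fin_index_normals G. \<forall>M\<in>fin_index_normals G. N \<subseteq> M \<longrightarrow> x N \<subseteq> x M}"

definition profinite_completion :: "('a, 'b) monoid_scheme \<Rightarrow> ('a set \<Rightarrow> 'a set) monoid" where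
  "profinite_completion G =
     \<lparr>carrier = profinite_carrier G,
      monoid.mult = (\<lambda>x y. restrict (\<lambda>N. x N <#>\<^bsub>G\<^esub> y N) (fin_index_normals G)),
      monoid.one = restrict (\<lambda>N. N) (fin_index_normals G)\<rparr>"

definition profinite_topology :: "('a, 'b) monoid_scheme \<Rightarrow> ('a set \<Rightarrow> 'a set) topology" where
  "profinite_topology G =
     subtopology
       (product_topology (\<lambda>N. discrete_topology (rcosets\<^bsub>G\<^esub> N)) (fin_index_normals G))
       (profinite_carrier G)"

end

theory Submission
  imports Defs
begin

(*
  Let M n be the intersection of the normal subgroups of G of index at most n; as G is finitely
  generated there are finitely many of them, so M n has finite index, and the subgroups
  L n = M n \<inter> H are cofinal among the normal subgroups of finite index of H.  By hypothesis each
  H / L n is a quotient of G; the surjections G \<rightarrow> H / L n form finite nonempty sets, related by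
  the projections H / L (n+1) \<rightarrow> H / L n, so Koenig's lemma gives a compatible sequence psi n of
  them.  It induces a continuous homomorphism Phi between the profinite completions, which is onto
  by a second application of Koenig's lemma.  For K n = ker (psi n) one has [G : K n] = [H : L n],
  M n \<subseteq> K n and [G : M n] \<le> [G : H] [H : L n].  The M n-coordinate of a point of ker Phi is one
  of the at most [G : H] cosets of M n inside K n, and distinct points are separated by these
  coordinates, so ker Phi has at most [G : H] elements.
*)

section \<open>Cosets and indices\<close>

lemma set_mult_carrier_update [simp]: "set_mult (G\<lparr>carrier := H\<rparr>) = set_mult G"
  by (simp add: set_mult_def fun_eq_iff)

lemma r_coset_carrier_update [simp]: "r_coset (G\<lparr>carrier := H\<rparr>) = r_coset G"
  by (simp add: r_coset_def fun_eq_iff)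

lemma rcosets_carrier_update: "rcosets\<^bsub>G\<lparr>carrier := H\<rparr>\<^esub> N = (\<Union>a\<in>H. {N #>\<^bsub>G\<^esub> a})"
  by (simp add: RCOSETS_def)

context group begin

lemma rcosetsE:
  assumes "c \<in> rcosets N"
  obtains a where "a \<in> carrier G" "c = N #> a"
  using assms by (auto simp: RCOSETS_def)

lemma rcos_eq_iff:
  assumes "subgroup N G" "a \<in> carrier G" "b \<in> carrier G"
  shows "N #> a = N #> b \<longleftrightarrow> a \<otimes> inv b \<in> N"
  using subgroup.rcos_module[OF assms(1) is_group assms(3,2)] repr_independence[OF _ assms(3,1)]
    rcos_self[OF assms(2,1)] by blast

lemma rcos_in_rcosets:
  assumes "subgroup N G" "c \<in> rcosets N" "g \<in> carrier G"
  shows "c #> g \<in> rcosets N"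
  using assms
  by (auto elim!: rcosetsE simp: coset_mult_assoc subgroup.subset intro!: rcosetsI subgroup.subset)

lemma rcosets_subset_carrier: "subgroup N G \<Longrightarrow> c \<in> rcosets N \<Longrightarrow> c \<subseteq> carrier G"
  by (force elim!: rcosetsE simp: r_coset_def intro: subgroup.mem_carrier)

lemma rcosets_rep:
  assumes "subgroup N G" "c \<in> rcosets N" "a \<in> c"
  shows "c = N #> a" "a \<in> carrier G"
proof -
  obtain b where "b \<in> carrier G" "c = N #> b" using assms(2) by (rule rcosetsE)
  then show "c = N #> a" "a \<in> carrier G"
    using assms(1,3) repr_independence r_coset_subset_G[OF subgroup.subset] by blast+
qed

lemma some_in_rcoset: "subgroup N G \<Longrightarrow> c \<in> rcosets N \<Longrightarrow> (SOME a. a \<in> c) \<in> c"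
  by (metis rcos_self rcosetsE someI)

lemma set_mult_subgroup_absorb:
  assumes "subgroup L G" "subgroup N G" "L \<subseteq> N"
  shows "N <#> L = N"
proof
  show "N <#> L \<subseteq> N"
    using assms by (auto simp: set_mult_def intro: subgroup.m_closed)
  show "N \<subseteq> N <#> L"
    using assms subgroup.one_closed[OF assms(1)]
    by (force simp: set_mult_def dest: subgroup.mem_carrier intro: r_one[symmetric])
qed

lemma set_mult_rcos_absorb:
  "subgroup L G \<Longrightarrow> subgroup N G \<Longrightarrow> L \<subseteq> N \<Longrightarrow> a \<in> carrier G \<Longrightarrow> N <#> (L #> a) = N #> a"
  by (simp add: setmult_rcos_assoc subgroup.subset set_mult_subgroup_absorb)

lemma rcos_subset_imp_eq:
  assumes "subgroup L G" "subgroup N G" "L \<subseteq> N" "a \<in> carrier G" "b \<in> carrier G"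
    and "L #> a \<subseteq> N #> b"
  shows "N #> a = N #> b"
  using rcos_self[OF assms(4,1)] assms(6) repr_independence[OF _ assms(5,2)] by blast

lemma finite_rcosets_Inter:
  assumes "finite F" "F \<noteq> {}" and sub: "\<And>N. N \<in> F \<Longrightarrow> subgroup N G"
    and fin: "\<And>N. N \<in> F \<Longrightarrow> finite (rcosets N)"
  shows "finite (rcosets (\<Inter>F))"
proof -
  have subI: "subgroup (\<Inter>F) G" using subgroups_Inter[OF sub assms(2)] by blast
  let ?f = "\<lambda>c. \<lambda>N\<in>F. N <#> c"
  have absorb: "N <#> (\<Inter>F #> a) = N #> a" if "N \<in> F" "a \<in> carrier G" for N a
    using set_mult_rcos_absorb[OF subI sub] that by blast
  have "?f ` (rcosets (\<Inter>F)) \<subseteq> (\<Pi>\<^sub>E N\<in>F. rcosets N)"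
    using absorb by (auto elim!: rcosetsE intro!: rcosetsI subgroup.subset sub)
  moreover have "inj_on ?f (rcosets (\<Inter>F))"
  proof (rule inj_onI)
    fix c d assume "c \<in> rcosets (\<Inter>F)" "d \<in> rcosets (\<Inter>F)" and eq: "?f c = ?f d"
    then obtain a b where ab: "a \<in> carrier G" "c = \<Inter>F #> a" "b \<in> carrier G" "d = \<Inter>F #> b"
      by (meson rcosetsE)
    have "a \<otimes> inv b \<in> N" if "N \<in> F" for N
      using fun_cong[OF eq, of N] that ab absorb rcos_eq_iff[OF sub[OF that] ab(1,3)] by auto
    then show "c = d"
      using ab rcos_eq_iff[OF subI ab(1,3)] by auto
  qed
  ultimately show ?thesis
    using inj_on_finite assms by (metis finite_PiE)
qed

text \<open>Every coset of \<open>A\<close> is \<open>A r s\<close> with \<open>r\<close> representing a coset of \<open>A\<close> in \<open>B\<close> and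
  \<open>s\<close> one of \<open>B\<close> in \<open>G\<close>.\<close>
lemma finite_index_tower:
  assumes A: "subgroup A G" and B: "subgroup B G" and "A \<subseteq> B"
    and fin_AB: "finite (rcosets\<^bsub>G\<lparr>carrier := B\<rparr>\<^esub> A)" and fin_B: "finite (rcosets B)"
  shows "finite (rcosets A)"
    and "card (rcosets A) \<le> card (rcosets\<^bsub>G\<lparr>carrier := B\<rparr>\<^esub> A) * card (rcosets B)"
proof -
  define rep where "rep c = (SOME x. x \<in> c)" for c :: "'a set"
  let ?X = "(rcosets\<^bsub>G\<lparr>carrier := B\<rparr>\<^esub> A) \<times> rcosets B"
  let ?g = "\<lambda>(c1, c2). A #> (rep c1 \<otimes> rep c2)"
  have "c \<in> ?g ` ?X" if c: "c \<in> rcosets A" for c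
  proof -
    obtain g where g: "g \<in> carrier G" "c = A #> g" using c by (rule rcosetsE)
    define t where "t = rep (B #> g)"
    have t: "t \<in> B #> g" unfolding t_def rep_def using some_in_rcoset[OF B rcosetsI] B g
      by (simp add: subgroup.subset)
    then have tG: "t \<in> carrier G" using r_coset_subset_G[OF subgroup.subset[OF B] g(1)] by blast
    define h where "h = t \<otimes> inv g"
    have hB: "h \<in> B" unfolding h_def by (rule subgroup.rcos_module_imp[OF B is_group g(1) t])
    have hG: "h \<in> carrier G" using subgroup.mem_carrier[OF B hB] .
    define c1 where "c1 = A #> inv h"
    have c1: "c1 \<in> rcosets\<^bsub>G\<lparr>carrier := B\<rparr>\<^esub> A"
      unfolding rcosets_carrier_update c1_def using subgroup.m_inv_closed[OF B hB] by blast
    define r where "r = rep c1"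
    have "r \<in> A #> inv h"
      unfolding r_def rep_def c1_def using some_in_rcoset[OF A rcosetsI] A hG
      by (simp add: subgroup.subset)
    then have r: "r \<otimes> h \<in> A" "r \<in> carrier G"
      using subgroup.rcos_module_imp[OF A is_group inv_closed[OF hG]] hG
        r_coset_subset_G[OF subgroup.subset[OF A] inv_closed[OF hG]] by auto
    have "r \<otimes> t \<otimes> inv g = r \<otimes> h" using r tG g by (simp add: h_def m_assoc)
    then have "c = A #> (r \<otimes> t)" using rcos_eq_iff[OF A _ g(1), of "r \<otimes> t"] r tG g by simp
    moreover have "B #> g \<in> rcosets B" using rcosetsI[OF subgroup.subset[OF B] g(1)] .
    ultimately show ?thesis using c1 unfolding r_def t_def by force
  qed
  then have sub: "rcosets A \<subseteq> ?g ` ?X" by blast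
  show "finite (rcosets A)" using finite_subset[OF sub] fin_AB fin_B by simp
  have "card (rcosets A) \<le> card (?g ` ?X)" using card_mono[OF _ sub] fin_AB fin_B by simp
  also have "\<dots> \<le> card ?X" using fin_AB fin_B by (intro card_image_le) simp
  finally show "card (rcosets A) \<le> card (rcosets\<^bsub>G\<lparr>carrier := B\<rparr>\<^esub> A) * card (rcosets B)"
    by (simp add: card_cartesian_product)
qed

lemma finite_index_mono:
  assumes A: "subgroup A G" and B: "subgroup B G" and AB: "A \<subseteq> B" and fin: "finite (rcosets A)"
  shows "finite (rcosets B)" "card (rcosets B) \<le> card (rcosets A)"
proof -
  have "rcosets B = (\<lambda>c. B <#> c) ` (rcosets A)"
  proof
    show "rcosets B \<subseteq> (\<lambda>c. B <#> c) ` (rcosets A)"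
      using set_mult_rcos_absorb[OF A B AB] rcosetsI[OF subgroup.subset[OF A]]
      by (force elim!: rcosetsE)
    show "(\<lambda>c. B <#> c) ` (rcosets A) \<subseteq> rcosets B"
      using set_mult_rcos_absorb[OF A B AB] rcosetsI[OF subgroup.subset[OF B]]
      by (auto elim!: rcosetsE)
  qed
  then show "finite (rcosets B)" "card (rcosets B) \<le> card (rcosets A)"
    using fin by (simp_all add: card_image_le)
qed

lemma finite_index_Int:
  assumes A: "subgroup A G" and B: "subgroup B G" and fin: "finite (rcosets A)"
  shows "finite (rcosets\<^bsub>G\<lparr>carrier := B\<rparr>\<^esub> (A \<inter> B))"
    and "card (rcosets\<^bsub>G\<lparr>carrier := B\<rparr>\<^esub> (A \<inter> B)) \<le> card (rcosets A)"
proof -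
  have AB: "subgroup (A \<inter> B) G" using subgroups_Inter_pair[OF A B] .
  let ?f = "\<lambda>c. A <#> c" and ?X = "rcosets\<^bsub>G\<lparr>carrier := B\<rparr>\<^esub> (A \<inter> B)"
  have absorb: "A <#> ((A \<inter> B) #> a) = A #> a" if "a \<in> B" for a
    using set_mult_rcos_absorb[OF AB A _ subgroup.mem_carrier[OF B that]] by blast
  have img: "?f ` ?X \<subseteq> rcosets A"
    using absorb subgroup.mem_carrier[OF B] rcosetsI[OF subgroup.subset[OF A]]
    by (auto simp: rcosets_carrier_update)
  have inj: "inj_on ?f ?X"
  proof (rule inj_onI)
    fix c d assume "c \<in> ?X" "d \<in> ?X" and eq: "?f c = ?f d"
    then obtain a b where ab: "a \<in> B" "c = (A \<inter> B) #> a" "b \<in> B" "d = (A \<inter> B) #> b"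
      by (auto simp: rcosets_carrier_update)
    have G: "a \<in> carrier G" "b \<in> carrier G" using ab subgroup.mem_carrier[OF B] by auto
    have "a \<otimes> inv b \<in> A" using eq ab absorb rcos_eq_iff[OF A G] by simp
    moreover have "a \<otimes> inv b \<in> B" using ab B by (simp add: subgroup.m_closed subgroup.m_inv_closed)
    ultimately show "c = d" using rcos_eq_iff[OF AB G] ab by auto
  qed
  show "finite ?X" "card ?X \<le> card (rcosets A)"
    using inj_on_finite[OF inj img fin] card_inj_on_le[OF inj img fin] by simp_all
qed

text \<open>Translating the cosets of \<open>A\<close> contained in \<open>B\<close> by representatives of the cosets of \<open>B\<close>
  is injective.\<close>
lemma card_rcosets_inside_mult_le:
  assumes A: "subgroup A G" and B: "subgroup B G" and AB: "A \<subseteq> B" and fin: "finite (rcosets A)"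
  shows "card {c\<in>rcosets A. c \<subseteq> B} * card (rcosets B) \<le> card (rcosets A)"
proof -
  define rep where "rep c = (SOME x. x \<in> c)" for c :: "'a set"
  let ?X = "{c\<in>rcosets A. c \<subseteq> B}"
  let ?F = "\<lambda>(c, d). c #> rep d"
  have rep: "rep d \<in> carrier G" "d = B #> rep d" if "d \<in> rcosets B" for d
    using rcosets_rep[OF B that some_in_rcoset[OF B that]] unfolding rep_def by auto
  have inj: "inj_on ?F (?X \<times> rcosets B)"
  proof (rule inj_onI, clarify)
    fix c d c' d' assume c: "c \<in> rcosets A" "c \<subseteq> B" and d: "d \<in> rcosets B"
      and c': "c' \<in> rcosets A" "c' \<subseteq> B" and d': "d' \<in> rcosets B"
      and eq: "c #> rep d = c' #> rep d'"
    obtain a where a: "a \<in> carrier G" "c = A #> a" using c(1) by (rule rcosetsE)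
    have aB: "a \<in> B" using rcos_self[OF a(1) A] a c(2) by blast
    have "a \<otimes> rep d \<in> c #> rep d" using rcos_self[OF a(1) A] a(2) unfolding r_coset_def by blast
    then have "a \<otimes> rep d \<in> c' #> rep d'" using eq by simp
    then obtain y where y: "y \<in> c'" "a \<otimes> rep d = y \<otimes> rep d'" unfolding r_coset_def by blast
    have yB: "y \<in> B" and yG: "y \<in> carrier G" using y c'(2) subgroup.subset[OF B] by auto
    have "rep d = inv a \<otimes> (y \<otimes> rep d')"
      using y(2) a(1) rep(1)[OF d] rep(1)[OF d'] yG by (metis inv_solve_left m_closed)
    then have "rep d \<otimes> inv (rep d') = inv a \<otimes> y"
      using a(1) yG rep(1)[OF d'] by (simp add: m_assoc)
    moreover have "inv a \<otimes> y \<in> B"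
      using aB yB B by (simp add: subgroup.m_closed subgroup.m_inv_closed)
    ultimately have dd: "d = d'"
      using rcos_eq_iff[OF B rep(1)[OF d] rep(1)[OF d']] rep(2)[OF d] rep(2)[OF d'] by simp
    have "(c #> rep d) #> inv (rep d) = (c' #> rep d) #> inv (rep d)" using eq dd by simp
    then have "c = c'"
      using rcosets_subset_carrier[OF A] c(1) c'(1) rep(1)[OF d] by (simp add: coset_mult_assoc)
    then show "c = c' \<and> d = d'" using dd by simp
  qed
  have img: "?F ` (?X \<times> rcosets B) \<subseteq> rcosets A"
    using rcos_in_rcosets[OF A] rep(1) by auto
  show ?thesis using card_inj_on_le[OF inj img fin] by (simp add: card_cartesian_product)
qed

lemma kernel_finite_index:
  assumes T: "group T" and h: "\<phi> \<in> hom G T" and fin: "finite (carrier T)"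
  shows "kernel G T \<phi> \<lhd> G" "finite (rcosets (kernel G T \<phi>))"
    "card (rcosets (kernel G T \<phi>)) \<le> card (carrier T)"
    "\<phi> ` carrier G = carrier T \<Longrightarrow> card (rcosets (kernel G T \<phi>)) = card (carrier T)"
proof -
  interpret group_hom G T \<phi> using T h by (simp add: group_hom_def group_hom_axioms_def is_group)
  let ?f = "\<lambda>Z. the_elem (\<phi> ` Z)"
  show "kernel G T \<phi> \<lhd> G" by (rule normal_kernel)
  have inj: "inj_on ?f (rcosets (kernel G T \<phi>))"
    using FactGroup_inj_on by (simp add: FactGroup_def)
  have img: "?f ` (rcosets (kernel G T \<phi>)) \<subseteq> carrier T"
    using hom_carrier[OF FactGroup_hom] by (simp add: FactGroup_def)
  show "finite (rcosets (kernel G T \<phi>))" using inj_on_finite[OF inj img fin] .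
  show "card (rcosets (kernel G T \<phi>)) \<le> card (carrier T)" using card_inj_on_le[OF inj img fin] .
  assume "\<phi> ` carrier G = carrier T"
  then have "bij_betw ?f (rcosets (kernel G T \<phi>)) (carrier T)"
    using FactGroup_iso_set by (simp add: iso_def FactGroup_def)
  then show "card (rcosets (kernel G T \<phi>)) = card (carrier T)" by (rule bij_betw_same_card)
qed


lemma quotient_projection_hom:
  assumes A: "A \<lhd> G" and B: "B \<lhd> G" and AB: "A \<subseteq> B"
  shows "(\<lambda>c. B <#> c) \<in> hom (G Mod A) (G Mod B)"
    and "(\<lambda>c. B <#> c) ` carrier (G Mod A) = carrier (G Mod B)"
proof -
  have sA: "subgroup A G" and sB: "subgroup B G" using A B normal_imp_subgroup by auto
  have absorb: "B <#> (A #> a) = B #> a" if "a \<in> carrier G" for a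
    using set_mult_rcos_absorb[OF sA sB AB that] .
  show "(\<lambda>c. B <#> c) \<in> hom (G Mod A) (G Mod B)"
  proof (rule homI)
    fix c assume "c \<in> carrier (G Mod A)"
    then obtain a where "a \<in> carrier G" "c = A #> a" by (auto simp: FactGroup_def elim!: rcosetsE)
    then show "B <#> c \<in> carrier (G Mod B)"
      using absorb rcosetsI[OF subgroup.subset[OF sB]] by (simp add: FactGroup_def)
  next
    fix c d assume "c \<in> carrier (G Mod A)" "d \<in> carrier (G Mod A)"
    then obtain a b where "a \<in> carrier G" "c = A #> a" "b \<in> carrier G" "d = A #> b"
      by (auto simp: FactGroup_def elim!: rcosetsE)
    then show "B <#> (c \<otimes>\<^bsub>G Mod A\<^esub> d) = (B <#> c) \<otimes>\<^bsub>G Mod B\<^esub> (B <#> d)"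
      using absorb normal.rcos_sum[OF A] normal.rcos_sum[OF B] by simp
  qed
  show "(\<lambda>c. B <#> c) ` carrier (G Mod A) = carrier (G Mod B)"
  proof
    show "(\<lambda>c. B <#> c) ` carrier (G Mod A) \<subseteq> carrier (G Mod B)"
      using absorb rcosetsI[OF subgroup.subset[OF sB]] by (auto simp: FactGroup_def elim!: rcosetsE)
    show "carrier (G Mod B) \<subseteq> (\<lambda>c. B <#> c) ` carrier (G Mod A)"
      using absorb rcosetsI[OF subgroup.subset[OF sA]] by (force simp: FactGroup_def elim!: rcosetsE)
  qed
qed

end

section \<open>Subgroups of bounded index in a finitely generated group\<close>

context group begin

lemma hom_eq_on_generate:
  assumes T: "group T" and h1: "\<phi> \<in> hom G T" and h2: "\<psi> \<in> hom G T"
    and S: "S \<subseteq> carrier G" and eq: "\<And>s. s \<in> S \<Longrightarrow> \<phi> s = \<psi> s"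
    and g: "g \<in> generate G S"
  shows "\<phi> g = \<psi> g"
proof -
  interpret \<phi>: group_hom G T \<phi> using T h1 by (simp add: group_hom_def group_hom_axioms_def is_group)
  interpret \<psi>: group_hom G T \<psi> using T h2 by (simp add: group_hom_def group_hom_axioms_def is_group)
  from g show ?thesis
  proof (induction g rule: generate.induct)
    case (eng a b)
    then have "a \<in> carrier G" "b \<in> carrier G" using generate_incl[OF S] by auto
    then show ?case using eng by simp
  qed (use eq S in auto)
qed

lemma finite_hom_extensional:
  assumes "fin_generated G" and T: "group T" "finite (carrier T)"
  shows "finite (hom G T \<inter> extensional (carrier G))"
proof -
  obtain S where S: "finite S" "S \<subseteq> carrier G" "generate G S = carrier G"
    using assms(1) unfolding fin_generated_def by blast
  have "inj_on (\<lambda>\<phi>. restrict \<phi> S) (hom G T \<inter> extensional (carrier G))"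
  proof (rule inj_onI)
    fix \<phi> \<psi> assume \<phi>: "\<phi> \<in> hom G T \<inter> extensional (carrier G)"
      and \<psi>: "\<psi> \<in> hom G T \<inter> extensional (carrier G)" and eq: "restrict \<phi> S = restrict \<psi> S"
    have "\<phi> s = \<psi> s" if "s \<in> S" for s using fun_cong[OF eq, of s] that by simp
    then have "\<phi> g = \<psi> g" if "g \<in> carrier G" for g
      using hom_eq_on_generate[OF T(1) _ _ S(2)] \<phi> \<psi> that S(3) by blast
    then show "\<phi> = \<psi>" using \<phi> \<psi> by (auto intro: extensionalityI)
  qed
  moreover have "(\<lambda>\<phi>. restrict \<phi> S) ` (hom G T \<inter> extensional (carrier G)) \<subseteq> S \<rightarrow>\<^sub>E carrier T"
    using S(2) by (auto simp: hom_def)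
  ultimately show ?thesis
    using inj_on_finite S(1) T(2) by (metis finite_PiE)
qed

end

lemma finite_Bij: "finite S \<Longrightarrow> finite (Bij S)"
  by (rule finite_subset[of _ "S \<rightarrow>\<^sub>E S"])
    (auto simp: PiE_iff finite_PiE dest: Bij_imp_funcset Bij_imp_extensional extensional_arb)

text \<open>Right translation by \<open>g\<inverse>\<close> of the cosets of a subgroup, enumerated by \<open>e\<close>, as a
  permutation of \<open>{..<k}\<close>; the inverse makes \<open>coset_perm G k e\<close> a homomorphism.\<close>
definition coset_perm :: "('a, 'b) monoid_scheme \<Rightarrow> nat \<Rightarrow> (nat \<Rightarrow> 'a set) \<Rightarrow> 'a \<Rightarrow> nat \<Rightarrow> nat"
  where "coset_perm G k e g = (\<lambda>i\<in>{..<k}. inv_into {..<k} e (e i #>\<^bsub>G\<^esub> inv\<^bsub>G\<^esub> g))"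

context group begin

context
  fixes N :: "'a set" and k :: nat and e :: "nat \<Rightarrow> 'a set"
  assumes N: "subgroup N G" and e: "bij_betw e {..<k} (rcosets N)"
begin

lemma coset_perm_apply:
  assumes "i < k" "g \<in> carrier G"
  shows "coset_perm G k e g i < k" "e (coset_perm G k e g i) = e i #> inv g"
proof -
  have "e i \<in> rcosets N" using e assms(1) bij_betwE by blast
  then have m: "e i #> inv g \<in> e ` {..<k}"
    using rcos_in_rcosets[OF N _ inv_closed[OF assms(2)]] e by (simp add: bij_betw_def)
  show "coset_perm G k e g i < k" "e (coset_perm G k e g i) = e i #> inv g"
    unfolding coset_perm_def using assms(1) inv_into_into[OF m] f_inv_into_f[OF m] by simp_all
qed

lemma coset_perm_eq_iff:
  assumes "i < k" "j < k" "g \<in> carrier G"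
  shows "coset_perm G k e g i = j \<longleftrightarrow> e i #> inv g = e j"
proof -
  have "coset_perm G k e g i = j \<longleftrightarrow> e (coset_perm G k e g i) = e j"
    using inj_on_eq_iff[OF bij_betw_imp_inj_on[OF e]] coset_perm_apply(1)[OF assms(1,3)] assms(2)
    by simp
  then show ?thesis using coset_perm_apply(2)[OF assms(1,3)] by simp
qed

lemma coset_perm_mult:
  assumes "i < k" "g \<in> carrier G" "h \<in> carrier G"
  shows "coset_perm G k e (g \<otimes> h) i = coset_perm G k e g (coset_perm G k e h i)"
proof -
  have sub: "e i \<subseteq> carrier G" using rcosets_subset_carrier[OF N] e assms(1) bij_betwE by blast
  have "e (coset_perm G k e g (coset_perm G k e h i)) = e i #> inv h #> inv g"
    using coset_perm_apply assms by simp
  also have "\<dots> = e i #> inv (g \<otimes> h)"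
    using sub assms by (simp add: coset_mult_assoc inv_mult_group)
  finally show ?thesis
    using coset_perm_eq_iff[OF assms(1) _ m_closed] coset_perm_apply(1) assms by simp
qed

lemma coset_perm_one:
  assumes "i < k"
  shows "coset_perm G k e \<one> i = i"
proof -
  have "e i \<subseteq> carrier G" using rcosets_subset_carrier[OF N] e assms bij_betwE by blast
  then show ?thesis using coset_perm_eq_iff[OF assms assms one_closed] by simp
qed

lemma coset_perm_Bij:
  assumes g: "g \<in> carrier G"
  shows "coset_perm G k e g \<in> Bij {..<k}"
proof -
  have cancel: "coset_perm G k e h (coset_perm G k e (inv h) i) = i"
    if "i < k" "h \<in> carrier G" for i h
    using coset_perm_mult[of i h "inv h"] coset_perm_one that by simp
  have "coset_perm G k e (inv g) (coset_perm G k e g i) = i" if "i < k" for i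
    using cancel[OF that inv_closed[OF g]] g by simp
  then have "bij_betw (coset_perm G k e g) {..<k} {..<k}"
    using cancel g coset_perm_apply(1) inv_closed[OF g]
    by (intro bij_betw_byWitness[where f' = "coset_perm G k e (inv g)"]) auto
  then show ?thesis by (simp add: Bij_def coset_perm_def)
qed

lemma coset_perm_hom: "restrict (coset_perm G k e) (carrier G) \<in> hom G (BijGroup {..<k})"
proof (rule homI)
  fix g h assume g: "g \<in> carrier G" and h: "h \<in> carrier G"
  have "coset_perm G k e (g \<otimes> h) = compose {..<k} (coset_perm G k e g) (coset_perm G k e h)"
    using coset_perm_mult[OF _ g h] by (auto simp: compose_def coset_perm_def[of G k e "g \<otimes> h"])
  then show "restrict (coset_perm G k e) (carrier G) (g \<otimes> h) =
      restrict (coset_perm G k e) (carrier G) g \<otimes>\<^bsub>BijGroup {..<k}\<^esub> restrict (coset_perm G k e) (carrier G) h"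
    using g h coset_perm_Bij by (simp add: BijGroup_def)
qed (simp add: BijGroup_def coset_perm_Bij)

lemma enum_self_index: "inv_into {..<k} e N < k" "e (inv_into {..<k} e N) = N"
proof -
  have "N \<in> e ` {..<k}"
    using e rcosetsI[OF subgroup.subset[OF N] one_closed] subgroup.subset[OF N]
    by (simp add: bij_betw_def)
  then show "inv_into {..<k} e N < k" "e (inv_into {..<k} e N) = N"
    using inv_into_into[of N e "{..<k}"] f_inv_into_f by simp_all
qed

lemma subgroup_eq_stabilizer:
  "N = {g \<in> carrier G. coset_perm G k e g (inv_into {..<k} e N) = inv_into {..<k} e N}"
proof -
  have "g \<in> N \<longleftrightarrow> coset_perm G k e g (inv_into {..<k} e N) = inv_into {..<k} e N"
    if g: "g \<in> carrier G" for g
  proof -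
    have "coset_perm G k e g (inv_into {..<k} e N) = inv_into {..<k} e N \<longleftrightarrow> N #> inv g = N"
      using coset_perm_eq_iff[OF enum_self_index(1) enum_self_index(1) g] enum_self_index(2) by simp
    also have "\<dots> \<longleftrightarrow> inv g \<in> N"
      using coset_join1[OF _ inv_closed[OF g] N] coset_join2[OF inv_closed[OF g] N] by blast
    also have "\<dots> \<longleftrightarrow> g \<in> N"
      using subgroup.m_inv_closed[OF N] g by (metis inv_inv)
    finally show ?thesis by simp
  qed
  then show ?thesis using subgroup.subset[OF N] by blast
qed

end

lemma rcosets_enumeration:
  "finite (rcosets N) \<Longrightarrow> \<exists>e. bij_betw e {..<card (rcosets N)} (rcosets N)"
  using ex_bij_betw_nat_finite[of "rcosets N"] by (simp add: atLeast0LessThan)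

text \<open>The normal core of a subgroup of finite index is the kernel of the coset action.\<close>
lemma ex_fin_index_normal_subset:
  assumes N: "subgroup N G" and fin: "finite (rcosets N)"
  shows "\<exists>U\<in>fin_index_normals G. U \<subseteq> N"
proof -
  define k where "k = card (rcosets N)"
  obtain e where e: "bij_betw e {..<k} (rcosets N)" using rcosets_enumeration[OF fin] k_def by blast
  define \<phi> where "\<phi> = restrict (coset_perm G k e) (carrier G)"
  have \<phi>: "\<phi> \<in> hom G (BijGroup {..<k})" unfolding \<phi>_def by (rule coset_perm_hom[OF N e])
  define U where "U = kernel G (BijGroup {..<k}) \<phi>"
  have "finite (carrier (BijGroup {..<k}))" by (simp add: BijGroup_def finite_Bij)
  then have "U \<in> fin_index_normals G"
    using kernel_finite_index[OF group_BijGroup \<phi>] unfolding U_def fin_index_normals_def by blast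
  moreover have "U \<subseteq> N"
  proof
    fix g assume "g \<in> U"
    then have g: "g \<in> carrier G" "\<phi> g = (\<lambda>i\<in>{..<k}. i)"
      by (simp_all add: U_def kernel_def BijGroup_def)
    then have "coset_perm G k e g = (\<lambda>i\<in>{..<k}. i)" by (simp add: \<phi>_def)
    then show "g \<in> N"
      by (subst subgroup_eq_stabilizer[OF N e]) (simp add: g(1) enum_self_index(1)[OF N e])
  qed
  ultimately show ?thesis by blast
qed

text \<open>A subgroup of index \<open>k\<close> is the stabilizer of a point under a homomorphism into the
  symmetric group on \<open>{..<k}\<close>, and there are only finitely many such homomorphisms.\<close>
lemma finite_subgroups_bounded_index:
  assumes fg: "fin_generated G"
  shows "finite {N. subgroup N G \<and> finite (rcosets N) \<and> card (rcosets N) \<le> n}"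
    (is "finite ?X")
proof -
  have "\<forall>N\<in>?X. \<exists>e. bij_betw e {..<card (rcosets N)} (rcosets N)"
    using rcosets_enumeration by blast
  then obtain enum where "\<forall>N\<in>?X. bij_betw (enum N) {..<card (rcosets N)} (rcosets N)"
    by (rule bchoice[THEN exE])
  then have enum: "bij_betw (enum N) {..<card (rcosets N)} (rcosets N)" if "N \<in> ?X" for N
    using that by blast
  define data where "data N = (card (rcosets N), inv_into {..<card (rcosets N)} (enum N) N,
      restrict (coset_perm G (card (rcosets N)) (enum N)) (carrier G))" for N
  define stab :: "nat \<times> nat \<times> ('a \<Rightarrow> nat \<Rightarrow> nat) \<Rightarrow> 'a set"
    where "stab = (\<lambda>(k, i, \<phi>). {g \<in> carrier G. \<phi> g i = i})"
  have "stab (data N) = N" if N: "N \<in> ?X" for N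
  proof -
    have "stab (data N) = {g \<in> carrier G. coset_perm G (card (rcosets N)) (enum N) g
        (inv_into {..<card (rcosets N)} (enum N) N) = inv_into {..<card (rcosets N)} (enum N) N}"
      by (auto simp: stab_def data_def)
    also have "\<dots> = N" using subgroup_eq_stabilizer[OF _ enum[OF N], symmetric] N by simp
    finally show ?thesis .
  qed
  then have inj: "inj_on data ?X" by (rule inj_on_inverseI)
  let ?D = "SIGMA k:{..n}. {..<k} \<times> (hom G (BijGroup {..<k}) \<inter> extensional (carrier G))"
  have "data N \<in> ?D" if N: "N \<in> ?X" for N
    using coset_perm_hom[OF _ enum[OF N]] enum_self_index(1)[OF _ enum[OF N]] N by (simp add: data_def)
  then have img: "data ` ?X \<subseteq> ?D" by blast
  have "finite (carrier (BijGroup {..<k}))" for k :: nat by (simp add: BijGroup_def finite_Bij)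
  then have "finite (hom G (BijGroup {..<k}) \<inter> extensional (carrier G))" for k :: nat
    by (rule finite_hom_extensional[OF fg group_BijGroup])
  then have "finite ?D" by (intro finite_SigmaI finite_cartesian_product finite_lessThan finite_atMost)
  then show ?thesis by (rule inj_on_finite[OF inj img])
qed

end

section \<open>Koenig's lemma for inverse sequences of finite sets\<close>

fun descend :: "(nat \<Rightarrow> 'x \<Rightarrow> 'x) \<Rightarrow> nat \<Rightarrow> nat \<Rightarrow> 'x \<Rightarrow> 'x" where
  "descend p 0 n y = y"
| "descend p (Suc k) n y = p n (descend p k (Suc n) y)"

lemma descend_in:
  assumes "\<And>n x. x \<in> A (Suc n) \<Longrightarrow> p n x \<in> A n"
  shows "y \<in> A (m + k) \<Longrightarrow> descend p k m y \<in> A m"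
  by (induction k arbitrary: m y) (auto simp: assms)

lemma descend_add: "descend p (k + j) n y = descend p k n (descend p j (n + k) y)"
  by (induction k arbitrary: n) auto

definition liftable :: "(nat \<Rightarrow> 'x set) \<Rightarrow> (nat \<Rightarrow> 'x \<Rightarrow> 'x) \<Rightarrow> nat \<Rightarrow> 'x \<Rightarrow> bool" where
  "liftable A p n x \<longleftrightarrow> x \<in> A n \<and> (\<forall>k. \<exists>y\<in>A (n + k). descend p k n y = x)"

text \<open>If every level above \<open>m\<close> reaches the finite set \<open>C\<close>, some element of \<open>C\<close> is reached from
  every level: otherwise each \<open>c \<in> C\<close> is missed from some level, hence all are missed from
  the highest of these levels.\<close>
lemma liftable_exists:
  assumes maps: "\<And>n x. x \<in> A (Suc n) \<Longrightarrow> p n x \<in> A n"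
    and C: "finite C" "C \<subseteq> A m" and hits: "\<And>k. \<exists>y\<in>A (m + k). descend p k m y \<in> C"
  shows "\<exists>c\<in>C. liftable A p m c"
proof (rule ccontr)
  assume "\<not> (\<exists>c\<in>C. liftable A p m c)"
  then have "\<forall>c\<in>C. \<exists>k. \<not> (\<exists>y\<in>A (m + k). descend p k m y = c)"
    using C(2) unfolding liftable_def by blast
  then obtain miss where miss: "\<And>c. c \<in> C \<Longrightarrow> \<not> (\<exists>y\<in>A (m + miss c). descend p (miss c) m y = c)"
    by metis
  define K where "K = Max (miss ` C)"
  obtain y where y: "y \<in> A (m + K)" "descend p K m y \<in> C" using hits by blast
  define c where "c = descend p K m y"
  have cC: "c \<in> C" using y c_def by simp
  have le: "miss c \<le> K" unfolding K_def using C(1) cC by simp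
  define y' where "y' = descend p (K - miss c) (m + miss c) y"
  have "y' \<in> A (m + miss c)"
    unfolding y'_def using descend_in[where A=A and p=p, OF maps, where y=y and m="m + miss c" and k="K - miss c"] y(1) le by simp
  moreover have "descend p (miss c) m y' = descend p K m y"
    unfolding y'_def using descend_add[of p "miss c" "K - miss c" m y] le by simp
  ultimately show False using miss[OF cC] c_def by blast
qed

lemma liftable_step:
  assumes maps: "\<And>n x. x \<in> A (Suc n) \<Longrightarrow> p n x \<in> A n"
    and fin: "\<And>n. finite (A n)" and x: "liftable A p n x"
  shows "\<exists>c. liftable A p (Suc n) c \<and> p n c = x"
proof -
  have "\<exists>c\<in>{c\<in>A (Suc n). p n c = x}. liftable A p (Suc n) c"
  proof (rule liftable_exists[OF maps])
    show "finite {c\<in>A (Suc n). p n c = x}" using fin by simp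
    fix k
    obtain y where y: "y \<in> A (n + Suc k)" "descend p (Suc k) n y = x"
      using x unfolding liftable_def by blast
    have "descend p k (Suc n) y \<in> A (Suc n)" using descend_in[where A=A and p=p, OF maps, where y=y and m="Suc n" and k=k] y(1) by simp
    then show "\<exists>y\<in>A (Suc n + k). descend p k (Suc n) y \<in> {c\<in>A (Suc n). p n c = x}"
      using y by (intro bexI[of _ y]) auto
  qed auto
  then show ?thesis by blast
qed

lemma koenig_inverse_limit:
  assumes fin: "\<And>n. finite (A n)" and ne: "\<And>n. A n \<noteq> {}"
    and maps: "\<And>n x. x \<in> A (Suc n) \<Longrightarrow> p n x \<in> A n"
  shows "\<exists>a. \<forall>n. a n \<in> A n \<and> p n (a (Suc n)) = a n"
proof -
  have "\<exists>c\<in>A 0. liftable A p 0 c"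
  proof (rule liftable_exists[OF maps fin])
    fix k
    obtain y where "y \<in> A k" using ne by blast
    then show "\<exists>y\<in>A (0 + k). descend p k 0 y \<in> A 0" using descend_in[where A=A and p=p, OF maps, where y=y and m=0 and k=k] by auto
  qed auto
  then obtain x0 where x0: "liftable A p 0 x0" by blast
  define a where "a = rec_nat x0 (\<lambda>n an. SOME c. liftable A p (Suc n) c \<and> p n c = an)"
  have a_Suc: "a (Suc n) = (SOME c. liftable A p (Suc n) c \<and> p n c = a n)" for n
    by (simp add: a_def)
  have a: "liftable A p n (a n)" for n
  proof (induction n)
    case 0 then show ?case using x0 by (simp add: a_def)
  next
    case (Suc n)
    then show ?case using someI_ex[OF liftable_step[OF maps fin Suc]] a_Suc by simp
  qed
  have "p n (a (Suc n)) = a n" for n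
    using someI_ex[OF liftable_step[OF maps fin a]] a_Suc by simp
  moreover have "a n \<in> A n" for n using a[of n] unfolding liftable_def by simp
  ultimately show ?thesis by blast
qed

section \<open>Profinite completions\<close>

lemma profinite_carrier_value:
  "x \<in> profinite_carrier G \<Longrightarrow> N \<in> fin_index_normals G \<Longrightarrow> x N \<in> rcosets\<^bsub>G\<^esub> N"
  unfolding profinite_carrier_def by auto

lemma profinite_carrier_mono:
  "x \<in> profinite_carrier G \<Longrightarrow> N \<in> fin_index_normals G \<Longrightarrow> N' \<in> fin_index_normals G
    \<Longrightarrow> N \<subseteq> N' \<Longrightarrow> x N \<subseteq> x N'"
  unfolding profinite_carrier_def by auto

lemma profinite_carrier_extensional:
  "x \<in> profinite_carrier G \<Longrightarrow> x \<in> extensional (fin_index_normals G)"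
  unfolding profinite_carrier_def by (auto simp: PiE_def)

lemma profinite_carrier_neq:
  assumes "x \<in> profinite_carrier G" "y \<in> profinite_carrier G" "x \<noteq> y"
  shows "\<exists>N\<in>fin_index_normals G. x N \<noteq> y N"
  using assms profinite_carrier_extensional extensionalityI by metis

context group begin

lemma fin_index_normalsD:
  assumes "N \<in> fin_index_normals G"
  shows "N \<lhd> G" "subgroup N G" "finite (rcosets N)"
  using assms normal_imp_subgroup unfolding fin_index_normals_def by auto

lemma carrier_fin_index_normal: "carrier G \<in> fin_index_normals G"
proof -
  have "rcosets (carrier G) \<subseteq> {carrier G}"
    by (auto elim!: rcosetsE simp: coset_join2 subgroup_self)
  then have "finite (rcosets (carrier G))" by (rule finite_subset) simp
  then show ?thesis unfolding fin_index_normals_def using normal_self by simp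
qed

lemma profinite_carrier_rep:
  assumes "x \<in> profinite_carrier G" "N \<in> fin_index_normals G" "a \<in> x N"
  shows "x N = N #> a" "a \<in> carrier G"
  using rcosets_rep[OF fin_index_normalsD(2)[OF assms(2)] profinite_carrier_value[OF assms(1,2)] assms(3)]
  by auto

lemma profinite_carrier_nonempty:
  assumes "x \<in> profinite_carrier G" "N \<in> fin_index_normals G"
  obtains a where "a \<in> x N"
  using some_in_rcoset[OF fin_index_normalsD(2) profinite_carrier_value] assms by blast

lemma profinite_mult_closed:
  assumes x: "x \<in> profinite_carrier G" and y: "y \<in> profinite_carrier G"
  shows "x \<otimes>\<^bsub>profinite_completion G\<^esub> y \<in> profinite_carrier G"
proof -
  let ?z = "\<lambda>N\<in>fin_index_normals G. x N <#> y N"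
  have eq: "x \<otimes>\<^bsub>profinite_completion G\<^esub> y = ?z" by (simp add: profinite_completion_def)
  have val: "?z N = N #> (a \<otimes> b)"
    if N: "N \<in> fin_index_normals G" and "a \<in> x N" "b \<in> y N" for N a b
    using profinite_carrier_rep[OF x N that(2)] profinite_carrier_rep[OF y N that(3)] N
      normal.rcos_sum[OF fin_index_normalsD(1)[OF N]] by simp
  show ?thesis unfolding eq profinite_carrier_def
  proof (intro CollectI conjI ballI impI)
    show "?z \<in> (\<Pi>\<^sub>E N\<in>fin_index_normals G. rcosets N)"
    proof
      fix N assume N: "N \<in> fin_index_normals G"
      obtain a b where "a \<in> x N" "b \<in> y N"
        using profinite_carrier_nonempty[OF x N] profinite_carrier_nonempty[OF y N] by metis
      then show "?z N \<in> rcosets N"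
        using val[OF N] profinite_carrier_rep(2)[OF x N] profinite_carrier_rep(2)[OF y N]
          rcosetsI[OF subgroup.subset[OF fin_index_normalsD(2)[OF N]]] by simp
    qed auto
    fix N N' assume N: "N \<in> fin_index_normals G" and N': "N' \<in> fin_index_normals G"
      and le: "N \<subseteq> N'"
    obtain a b where ab: "a \<in> x N" "b \<in> y N"
      using profinite_carrier_nonempty[OF x N] profinite_carrier_nonempty[OF y N] by metis
    then have "a \<in> x N'" "b \<in> y N'"
      using profinite_carrier_mono[OF x N N' le] profinite_carrier_mono[OF y N N' le] by auto
    then show "?z N \<subseteq> ?z N'" using val[OF N ab] val[OF N'] le unfolding r_coset_def by auto
  qed
qed

end

section \<open>A compatible system of surjections onto the finite quotients of \<open>H\<close>\<close>

locale quotient_inheriting_subgroup = group G for G :: "('a, 'b) monoid_scheme" (structure) +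
  fixes H :: "'a set"
  assumes fin_gen: "fin_generated G"
    and subgroup_H: "subgroup H G"
    and fin_index_H: "finite (rcosets H)"
    and quotients_inherited: "\<forall>N\<in>fin_index_normals (G\<lparr>carrier := H\<rparr>).
      \<exists>M\<in>fin_index_normals G. (G\<lparr>carrier := H\<rparr> Mod N) \<cong> (G Mod M)"
begin

abbreviation Hgrp where "Hgrp \<equiv> G\<lparr>carrier := H\<rparr>"

lemma group_Hgrp: "group Hgrp"
  using subgroup.subgroup_is_group[OF subgroup_H is_group] .

lemma H_subset: "H \<subseteq> carrier G"
  using subgroup.subset[OF subgroup_H] .

lemma normal_Hgrp_iff:
  "N \<lhd> Hgrp \<longleftrightarrow> subgroup N G \<and> N \<subseteq> H \<and> (\<forall>x\<in>H. \<forall>h\<in>N. x \<otimes> h \<otimes> inv x \<in> N)"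
proof -
  have sub: "subgroup N Hgrp \<longleftrightarrow> subgroup N G \<and> N \<subseteq> H"
    using incl_subgroup[OF subgroup_H, of N] subgroup_incl[OF _ subgroup_H, of N]
      subgroup.subset[of N Hgrp] by auto
  show ?thesis
    using group.normal_inv_iff[OF group_Hgrp, of N] sub m_inv_consistent[OF subgroup_H] by auto
qed

lemma fin_index_normals_HgrpD:
  assumes "N \<in> fin_index_normals Hgrp"
  shows "N \<lhd> Hgrp" "subgroup N G" "N \<subseteq> H" "finite (rcosets\<^bsub>Hgrp\<^esub> N)"
  using assms normal_Hgrp_iff unfolding fin_index_normals_def by auto

lemma fin_index_normal_Int_H:
  assumes U: "U \<in> fin_index_normals G"
  shows "U \<inter> H \<in> fin_index_normals Hgrp"
    and "card (rcosets\<^bsub>Hgrp\<^esub> (U \<inter> H)) \<le> card (rcosets U)"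
proof -
  have sub: "subgroup (U \<inter> H) G" using subgroups_Inter_pair[OF fin_index_normalsD(2)[OF U] subgroup_H] .
  have "x \<otimes> h \<otimes> inv x \<in> U \<inter> H" if "x \<in> H" "h \<in> U \<inter> H" for x h
    using normal.inv_op_closed2[OF fin_index_normalsD(1)[OF U]] subgroup.m_closed[OF subgroup_H]
      subgroup.m_inv_closed[OF subgroup_H] H_subset that by auto
  then have "U \<inter> H \<lhd> Hgrp" using sub normal_Hgrp_iff by blast
  moreover have "finite (rcosets\<^bsub>Hgrp\<^esub> (U \<inter> H))"
    and "card (rcosets\<^bsub>Hgrp\<^esub> (U \<inter> H)) \<le> card (rcosets U)"
    using finite_index_Int[OF fin_index_normalsD(2)[OF U] subgroup_H fin_index_normalsD(3)[OF U]]
    by auto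
  ultimately show "U \<inter> H \<in> fin_index_normals Hgrp"
    and "card (rcosets\<^bsub>Hgrp\<^esub> (U \<inter> H)) \<le> card (rcosets U)"
    unfolding fin_index_normals_def by auto
qed

text \<open>Inserting \<open>carrier G\<close> keeps the family nonempty, so that \<open>M 0 = carrier G\<close> rather
  than \<open>UNIV\<close>.\<close>
definition M :: "nat \<Rightarrow> 'a set" where
  "M n = \<Inter>(insert (carrier G) {U \<in> fin_index_normals G. card (rcosets U) \<le> n})"

lemma M_fin_index: "M n \<in> fin_index_normals G"
proof -
  let ?F = "insert (carrier G) {U \<in> fin_index_normals G. card (rcosets U) \<le> n}"
  have F: "U \<lhd> G" "subgroup U G" "finite (rcosets U)" if "U \<in> ?F" for U
    using fin_index_normalsD[of U] that carrier_fin_index_normal by auto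
  have "?F \<subseteq> insert (carrier G) {N. subgroup N G \<and> finite (rcosets N) \<and> card (rcosets N) \<le> n}"
    by (auto dest: fin_index_normalsD)
  then have fin: "finite ?F"
    using finite_subgroups_bounded_index[OF fin_gen, of n] by (simp add: finite_subset)
  have sub: "subgroup (M n) G" unfolding M_def by (rule subgroups_Inter[OF F(2)]) blast+
  have "M n \<lhd> G"
    unfolding normal_inv_iff
  proof (intro conjI sub ballI)
    fix x h assume x: "x \<in> carrier G" and h: "h \<in> M n"
    have "x \<otimes> h \<otimes> inv x \<in> U" if "U \<in> ?F" for U
      using h normal.inv_op_closed2[OF F(1)[OF that] x] that unfolding M_def by blast
    then show "x \<otimes> h \<otimes> inv x \<in> M n" unfolding M_def by blast
  qed
  moreover have "finite (rcosets (M n))"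
    unfolding M_def by (rule finite_rcosets_Inter[OF fin _ F(2,3)]) blast+
  ultimately show ?thesis unfolding fin_index_normals_def by simp
qed

lemma M_subgroup: "subgroup (M n) G"
  using fin_index_normalsD(2)[OF M_fin_index] .

lemma M_subset: "U \<in> fin_index_normals G \<Longrightarrow> card (rcosets U) \<le> n \<Longrightarrow> M n \<subseteq> U"
  unfolding M_def by blast

lemma M_antimono: "n \<le> m \<Longrightarrow> M m \<subseteq> M n"
  unfolding M_def by auto

lemma M_subset_kernel:
  assumes "group T" "\<phi> \<in> hom G T" "finite (carrier T)" "card (carrier T) \<le> n"
  shows "M n \<subseteq> kernel G T \<phi>"
  using kernel_finite_index[OF assms(1-3)] assms(4) M_subset unfolding fin_index_normals_def by simp

definition L :: "nat \<Rightarrow> 'a set" where "L n = M n \<inter> H"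

lemma L_fin_index: "L n \<in> fin_index_normals Hgrp"
  unfolding L_def using fin_index_normal_Int_H(1)[OF M_fin_index] .

lemma L_subgroup: "subgroup (L n) G"
  using fin_index_normals_HgrpD(2)[OF L_fin_index] .

lemma L_normal: "L n \<lhd> Hgrp"
  using fin_index_normals_HgrpD(1)[OF L_fin_index] .

lemma L_antimono: "n \<le> m \<Longrightarrow> L m \<subseteq> L n"
  unfolding L_def using M_antimono by blast

lemma L_cofinal:
  assumes N: "N \<in> fin_index_normals Hgrp"
  shows "\<exists>n. L n \<subseteq> N"
proof -
  have "finite (rcosets N)"
    using finite_index_tower(1)[OF fin_index_normals_HgrpD(2)[OF N] subgroup_H
        fin_index_normals_HgrpD(3,4)[OF N] fin_index_H] .
  then obtain U where "U \<in> fin_index_normals G" "U \<subseteq> N"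
    using ex_fin_index_normal_subset[OF fin_index_normals_HgrpD(2)[OF N]] by blast
  then have "L (card (rcosets U)) \<subseteq> N" using M_subset[of U "card (rcosets U)"] unfolding L_def by blast
  then show ?thesis by blast
qed

abbreviation Q :: "nat \<Rightarrow> 'a set monoid" where "Q n \<equiv> Hgrp Mod L n"

lemma Q_group: "group (Q n)"
  using normal.factorgroup_is_group[OF L_normal] .

lemma Q_carrier: "carrier (Q n) = (\<Union>a\<in>H. {L n #> a})"
  by (simp add: FactGroup_def rcosets_carrier_update)

lemma Q_finite: "finite (carrier (Q n))"
  using fin_index_normals_HgrpD(4)[OF L_fin_index] by (simp add: FactGroup_def)

definition epis :: "nat \<Rightarrow> ('a \<Rightarrow> 'a set) set" where
  "epis n = {\<psi> \<in> hom G (Q n). \<psi> ` carrier G = carrier (Q n) \<and> \<psi> \<in> extensional (carrier G)}"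

definition epi_proj :: "nat \<Rightarrow> ('a \<Rightarrow> 'a set) \<Rightarrow> 'a \<Rightarrow> 'a set" where
  "epi_proj n \<psi> = (\<lambda>g\<in>carrier G. L n <#> \<psi> g)"

lemma finite_epis: "finite (epis n)"
  using finite_hom_extensional[OF fin_gen Q_group Q_finite]
  by (rule finite_subset[rotated]) (auto simp: epis_def)

lemma epis_nonempty: "epis n \<noteq> {}"
proof -
  obtain U where U: "U \<in> fin_index_normals G" "Q n \<cong> G Mod U"
    using quotients_inherited L_fin_index by blast
  have "G Mod U \<cong> Q n" using group.iso_sym[OF Q_group U(2)] .
  then obtain \<phi> where \<phi>: "\<phi> \<in> iso (G Mod U) (Q n)" unfolding is_iso_def by blast
  have U_normal: "U \<lhd> G" using fin_index_normalsD(1)[OF U(1)] .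
  define \<psi> where "\<psi> = (\<lambda>g\<in>carrier G. \<phi> (U #> g))"
  have "\<phi> \<circ> (\<lambda>g. U #> g) \<in> hom G (Q n)"
    using Group.hom_compose[OF normal.r_coset_hom_Mod[OF U_normal]] \<phi> unfolding iso_def by blast
  then have "\<psi> \<in> hom G (Q n)" by (rule hom_restrict) (simp add: \<psi>_def)
  moreover have "\<psi> ` carrier G = \<phi> ` ((\<lambda>g. U #> g) ` carrier G)" unfolding \<psi>_def by auto
  moreover have "\<dots> = carrier (Q n)"
    using \<phi> unfolding iso_def bij_betw_def by (simp add: carrier_FactGroup)
  ultimately have "\<psi> \<in> epis n" unfolding epis_def by (simp add: \<psi>_def)
  then show ?thesis by blast
qed

lemma epi_proj_in_epis: "\<psi> \<in> epis (Suc n) \<Longrightarrow> epi_proj n \<psi> \<in> epis n"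
proof -
  assume \<psi>: "\<psi> \<in> epis (Suc n)"
  have proj: "(\<lambda>c. L n <#> c) \<in> hom (Q (Suc n)) (Q n)"
    "(\<lambda>c. L n <#> c) ` carrier (Q (Suc n)) = carrier (Q n)"
    using group.quotient_projection_hom[OF group_Hgrp L_normal L_normal L_antimono[of n "Suc n"]]
    by auto
  have "(\<lambda>c. L n <#> c) \<circ> \<psi> \<in> hom G (Q n)"
    using Group.hom_compose[OF _ proj(1)] \<psi> unfolding epis_def by blast
  then have hom: "epi_proj n \<psi> \<in> hom G (Q n)" by (rule hom_restrict) (simp add: epi_proj_def)
  have "epi_proj n \<psi> ` carrier G = (\<lambda>c. L n <#> c) ` (\<psi> ` carrier G)"
    unfolding epi_proj_def by auto
  also have "\<dots> = carrier (Q n)" using \<psi> proj(2) unfolding epis_def by simp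
  finally show "epi_proj n \<psi> \<in> epis n" using hom unfolding epis_def epi_proj_def by simp
qed

text \<open>A compatible choice of surjections \<open>G \<rightarrow> H / L n\<close>; it exists because each \<open>epis n\<close>
  is finite and nonempty.\<close>
definition psi :: "nat \<Rightarrow> 'a \<Rightarrow> 'a set" where
  "psi = (SOME \<psi>. \<forall>n. \<psi> n \<in> epis n \<and> epi_proj n (\<psi> (Suc n)) = \<psi> n)"

lemma psi: "psi n \<in> epis n" "epi_proj n (psi (Suc n)) = psi n"
proof -
  have "\<exists>\<psi>. \<forall>n. \<psi> n \<in> epis n \<and> epi_proj n (\<psi> (Suc n)) = \<psi> n"
    by (rule koenig_inverse_limit[OF finite_epis epis_nonempty epi_proj_in_epis])
  then have "\<forall>n. psi n \<in> epis n \<and> epi_proj n (psi (Suc n)) = psi n"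
    unfolding psi_def by (rule someI_ex)
  then show "psi n \<in> epis n" "epi_proj n (psi (Suc n)) = psi n" by auto
qed

lemma psi_hom: "psi n \<in> hom G (Q n)"
  using psi(1) unfolding epis_def by simp

lemma psi_surj: "psi n ` carrier G = carrier (Q n)"
  using psi(1) unfolding epis_def by simp

lemma psi_group_hom: "group_hom G (Q n) (psi n)"
  using Q_group psi_hom by (simp add: group_hom_def group_hom_axioms_def is_group)

lemma psi_rep: "g \<in> carrier G \<Longrightarrow> \<exists>h\<in>H. psi n g = L n #> h"
  using hom_in_carrier[OF psi_hom] Q_carrier by blast

lemma psi_antimono:
  assumes "n \<le> m" "g \<in> carrier G" "h \<in> H" "psi m g = L m #> h"
  shows "psi n g = L n #> h"
  using assms(1)
proof (induction n rule: inc_induct)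
  case base
  show ?case using assms(4) .
next
  case (step k)
  have "psi k g = L k <#> psi (Suc k) g"
    using psi(2)[of k] assms(2) unfolding epi_proj_def by (metis restrict_apply')
  also have "\<dots> = L k #> h"
    using step(3) set_mult_rcos_absorb[OF L_subgroup L_subgroup L_antimono] assms(3) H_subset by auto
  finally show ?case .
qed

definition K :: "nat \<Rightarrow> 'a set" where "K n = kernel G (Q n) (psi n)"

lemma K_fin_index: "K n \<in> fin_index_normals G"
  and card_K: "card (rcosets (K n)) = card (rcosets\<^bsub>Hgrp\<^esub> (L n))"
  using kernel_finite_index[OF Q_group psi_hom Q_finite] psi_surj
  unfolding K_def fin_index_normals_def by (auto simp: FactGroup_def)

lemma K_subgroup: "subgroup (K n) G"
  using fin_index_normalsD(2)[OF K_fin_index] .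

lemma K_iff: "g \<in> K n \<longleftrightarrow> g \<in> carrier G \<and> psi n g = L n"
  unfolding K_def kernel_def by simp

lemma K_antimono: "n \<le> m \<Longrightarrow> K m \<subseteq> K n"
  using psi_antimono[of n m _ \<one>] subgroup.one_closed[OF subgroup_H]
    coset_mult_one[OF subgroup.subset[OF L_subgroup]] by (auto simp: K_iff)

lemma psi_const_on_K_coset:
  assumes a: "a \<in> carrier G" and g: "g \<in> K n #> a"
  shows "psi n g = psi n a"
proof -
  interpret group_hom G "Q n" "psi n" by (rule psi_group_hom)
  obtain k where k: "k \<in> K n" "g = k \<otimes> a" using g unfolding r_coset_def by blast
  then have "psi n g = L n <#> psi n a" using a K_iff by simp
  also have "\<dots> = psi n a"
    using normal.rcosets_mult_eq[OF L_normal] hom_in_carrier[OF psi_hom a] by (simp add: FactGroup_def)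
  finally show ?thesis .
qed

text \<open>Every \<open>U\<close> of index at most \<open>n\<close> contains the \<open>H\<close>-coordinate \<open>h\<close> of \<open>g \<in> M n\<close>: composing
  \<open>psi n\<close> with \<open>H / L n \<rightarrow> H / (U \<inter> H)\<close> gives a map into a group of order at most \<open>n\<close>, whose
  kernel therefore contains \<open>M n\<close>.\<close>
lemma M_subset_K: "M n \<subseteq> K n"
proof
  fix g assume g: "g \<in> M n"
  have gG: "g \<in> carrier G" using g fin_index_normalsD(2)[OF M_fin_index] subgroup.subset by blast
  obtain h where h: "h \<in> H" "psi n g = L n #> h" using psi_rep[OF gG] by blast
  have hG: "h \<in> carrier G" using h(1) H_subset by blast
  have "h \<in> U" if U: "U \<in> fin_index_normals G" "card (rcosets U) \<le> n" for U
  proof -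
    define V where "V = U \<inter> H"
    have V: "V \<in> fin_index_normals Hgrp" "card (rcosets\<^bsub>Hgrp\<^esub> V) \<le> n"
      using fin_index_normal_Int_H[OF U(1)] U(2) unfolding V_def by auto
    have LV: "L n \<subseteq> V" using M_subset[OF U] unfolding L_def V_def by blast
    have proj: "(\<lambda>c. V <#> c) \<in> hom (Q n) (Hgrp Mod V)"
      using group.quotient_projection_hom(1)[OF group_Hgrp L_normal fin_index_normals_HgrpD(1)[OF V(1)] LV]
      by simp
    define \<phi> where "\<phi> = (\<lambda>c. V <#> c) \<circ> psi n"
    have "\<phi> \<in> hom G (Hgrp Mod V)" unfolding \<phi>_def using Group.hom_compose[OF psi_hom proj] .
    moreover have "finite (carrier (Hgrp Mod V))" "card (carrier (Hgrp Mod V)) \<le> n"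
      using fin_index_normals_HgrpD(4)[OF V(1)] V(2) by (auto simp: FactGroup_def)
    ultimately have "M n \<subseteq> kernel G (Hgrp Mod V) \<phi>"
      using M_subset_kernel normal.factorgroup_is_group[OF fin_index_normals_HgrpD(1)[OF V(1)]] by blast
    then have "\<phi> g = V" using g unfolding kernel_def by auto
    moreover have "\<phi> g = V #> h"
      unfolding \<phi>_def using h(2) set_mult_rcos_absorb[OF L_subgroup _ LV hG]
        fin_index_normals_HgrpD(2)[OF V(1)] by simp
    ultimately have "h \<in> V" using coset_join1[OF _ hG fin_index_normals_HgrpD(2)[OF V(1)]] by simp
    then show "h \<in> U" unfolding V_def by blast
  qed
  then have "h \<in> L n" using h(1) hG unfolding L_def M_def by blast
  then have "psi n g = L n" using h(2) coset_join2[OF hG L_subgroup] by simp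
  then show "g \<in> K n" using K_iff gG by simp
qed

lemma card_M_le:
  "card (rcosets (M n)) \<le> card (rcosets H) * card (rcosets\<^bsub>Hgrp\<^esub> (L n))"
proof -
  have L: "subgroup (L n) G" "L n \<subseteq> H" "finite (rcosets\<^bsub>Hgrp\<^esub> (L n))"
    using fin_index_normals_HgrpD[OF L_fin_index] by auto
  have "card (rcosets (M n)) \<le> card (rcosets (L n))"
    using finite_index_mono(2)[OF L(1) M_subgroup _ finite_index_tower(1)[OF L(1) subgroup_H L(2,3) fin_index_H]]
    unfolding L_def by blast
  also have "\<dots> \<le> card (rcosets\<^bsub>Hgrp\<^esub> (L n)) * card (rcosets H)"
    using finite_index_tower(2)[OF L(1) subgroup_H L(2,3) fin_index_H] .
  finally show ?thesis by (simp add: mult.commute)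
qed

text \<open>Since \<open>[G : K n] = [H : L n]\<close> and \<open>[G : M n] \<le> [G : H] [H : L n]\<close>, at most \<open>[G : H]\<close> cosets
  of \<open>M n\<close> lie in \<open>K n\<close>.\<close>
lemma card_M_cosets_in_K_le: "card {c \<in> rcosets (M n). c \<subseteq> K n} \<le> card (rcosets H)"
proof -
  let ?q = "card (rcosets\<^bsub>Hgrp\<^esub> (L n))"
  have "L n #> \<one> \<in> rcosets\<^bsub>Hgrp\<^esub> (L n)"
    using subgroup.one_closed[OF subgroup_H] by (auto simp: rcosets_carrier_update)
  then have q: "?q > 0" using fin_index_normals_HgrpD(4)[OF L_fin_index] card_gt_0_iff by blast
  have "card {c \<in> rcosets (M n). c \<subseteq> K n} * ?q \<le> card (rcosets (M n))"
    using card_rcosets_inside_mult_le[OF M_subgroup K_subgroup M_subset_K fin_index_normalsD(3)[OF M_fin_index]]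
    by (simp add: card_K)
  also have "\<dots> \<le> card (rcosets H) * ?q" using card_M_le .
  finally show ?thesis using q by simp
qed

section \<open>The homomorphism between the profinite completions\<close>

definition level :: "'a set \<Rightarrow> nat" where "level N = (LEAST n. L n \<subseteq> N)"

lemma L_level_subset: "N \<in> fin_index_normals Hgrp \<Longrightarrow> L (level N) \<subseteq> N"
  unfolding level_def using L_cofinal by (metis LeastI_ex)

lemma level_le: "L m \<subseteq> N \<Longrightarrow> level N \<le> m"
  unfolding level_def by (rule Least_le)

definition Phi :: "('a set \<Rightarrow> 'a set) \<Rightarrow> 'a set \<Rightarrow> 'a set" where
  "Phi x = (\<lambda>N\<in>fin_index_normals Hgrp. N <#> psi (level N) (SOME g. g \<in> x (K (level N))))"

lemma Phi_extensional: "Phi x \<in> extensional (fin_index_normals Hgrp)"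
  by (simp add: Phi_def)

lemma Phi_apply:
  assumes x: "x \<in> profinite_carrier G" and N: "N \<in> fin_index_normals Hgrp" and LN: "L m \<subseteq> N"
    and g: "g \<in> x (K m)" and h: "h \<in> H" and psi_g: "psi m g = L m #> h"
  shows "Phi x N = N #> h"
proof -
  define n where "n = level N"
  have nm: "n \<le> m" unfolding n_def using level_le[OF LN] .
  have gn: "g \<in> x (K n)"
    using g profinite_carrier_mono[OF x K_fin_index K_fin_index K_antimono[OF nm]] by blast
  have xK: "x (K n) = K n #> g" and gG: "g \<in> carrier G"
    using profinite_carrier_rep[OF x K_fin_index gn] by auto
  define g0 where "g0 = (SOME g. g \<in> x (K n))"
  have "g0 \<in> x (K n)" unfolding g0_def using gn by (rule someI)
  then have "psi n g0 = psi n g" using psi_const_on_K_coset[OF gG] xK by simp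
  also have "\<dots> = L n #> h" using psi_antimono[OF nm gG h psi_g] .
  finally have "Phi x N = N <#> (L n #> h)" unfolding Phi_def using N n_def g0_def by simp
  also have "\<dots> = N #> h"
    using set_mult_rcos_absorb[OF L_subgroup fin_index_normals_HgrpD(2)[OF N] L_level_subset[OF N]]
      h H_subset n_def by auto
  finally show ?thesis .
qed

lemma Phi_apply_obtain:
  assumes x: "x \<in> profinite_carrier G" and N: "N \<in> fin_index_normals Hgrp" and LN: "L m \<subseteq> N"
  obtains h g where "h \<in> H" "g \<in> x (K m)" "psi m g = L m #> h" "Phi x N = N #> h"
proof -
  obtain g where g: "g \<in> x (K m)" using profinite_carrier_nonempty[OF x K_fin_index] by blast
  obtain h where h: "h \<in> H" "psi m g = L m #> h"
    using psi_rep[OF profinite_carrier_rep(2)[OF x K_fin_index g]] by blast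
  show ?thesis using that Phi_apply[OF x N LN g h] g h by blast
qed

lemma Phi_in_carrier: "x \<in> profinite_carrier G \<Longrightarrow> Phi x \<in> profinite_carrier Hgrp"
  unfolding profinite_carrier_def[of Hgrp]
proof (intro CollectI conjI ballI impI)
  assume x: "x \<in> profinite_carrier G"
  show "Phi x \<in> (\<Pi>\<^sub>E N\<in>fin_index_normals Hgrp. rcosets\<^bsub>Hgrp\<^esub> N)"
  proof
    fix N assume N: "N \<in> fin_index_normals Hgrp"
    obtain h where "h \<in> H" "Phi x N = N #> h"
      using Phi_apply_obtain[OF x N L_level_subset[OF N]] by metis
    then show "Phi x N \<in> rcosets\<^bsub>Hgrp\<^esub> N" by (auto simp: rcosets_carrier_update)
  qed (simp add: Phi_def)
  fix N N' assume N: "N \<in> fin_index_normals Hgrp" and N': "N' \<in> fin_index_normals Hgrp"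
    and le: "N \<subseteq> N'"
  define m where "m = max (level N) (level N')"
  have "L m \<subseteq> L (level N)" "L m \<subseteq> L (level N')" using L_antimono unfolding m_def by auto
  then have "L m \<subseteq> N" "L m \<subseteq> N'" using L_level_subset[OF N] L_level_subset[OF N'] by auto
  then obtain h g where "h \<in> H" "g \<in> x (K m)" "psi m g = L m #> h" "Phi x N = N #> h"
    and "Phi x N' = N' #> h"
    using Phi_apply_obtain[OF x N] Phi_apply[OF x N'] by metis
  then show "Phi x N \<subseteq> Phi x N'" using le unfolding r_coset_def by auto
qed

lemma Phi_mult_apply:
  assumes x: "x \<in> profinite_carrier G" and y: "y \<in> profinite_carrier G"
    and N: "N \<in> fin_index_normals Hgrp"
  shows "Phi (x \<otimes>\<^bsub>profinite_completion G\<^esub> y) N = Phi x N <#> Phi y N"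
proof -
  define z where "z = x \<otimes>\<^bsub>profinite_completion G\<^esub> y"
  have z: "z \<in> profinite_carrier G" unfolding z_def using profinite_mult_closed[OF x y] .
  note LN = L_level_subset[OF N]
  obtain h g where h: "h \<in> H" "g \<in> x (K (level N))" "psi (level N) g = L (level N) #> h"
    "Phi x N = N #> h"
    using Phi_apply_obtain[OF x N LN] by metis
  obtain h' g' where h': "h' \<in> H" "g' \<in> y (K (level N))" "psi (level N) g' = L (level N) #> h'"
    "Phi y N = N #> h'"
    using Phi_apply_obtain[OF y N LN] by metis
  have gG: "g \<in> carrier G" and g'G: "g' \<in> carrier G"
    using profinite_carrier_rep(2)[OF x K_fin_index h(2)] profinite_carrier_rep(2)[OF y K_fin_index h'(2)]
    by auto
  have "z (K (level N)) = x (K (level N)) <#> y (K (level N))"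
    unfolding z_def using K_fin_index by (simp add: profinite_completion_def)
  then have "g \<otimes> g' \<in> z (K (level N))" using h(2) h'(2) unfolding set_mult_def by blast
  moreover have "psi (level N) (g \<otimes> g') = psi (level N) g <#> psi (level N) g'"
    using hom_mult[OF psi_hom gG g'G] by (simp add: FactGroup_def)
  then have "psi (level N) (g \<otimes> g') = L (level N) #> (h \<otimes> h')"
    using h(1,3) h'(1,3) normal.rcos_sum[OF L_normal, of h h'] by simp
  ultimately have "Phi z N = N #> (h \<otimes> h')"
    using Phi_apply[OF z N LN] h(1) h'(1) subgroup.m_closed[OF subgroup_H] by blast
  also have "\<dots> = (N #> h) <#> (N #> h')"
    using normal.rcos_sum[OF fin_index_normals_HgrpD(1)[OF N], of h h'] h(1) h'(1) by simp
  finally show ?thesis using h(4) h'(4) by (simp add: z_def)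
qed

lemma Phi_hom: "Phi \<in> hom (profinite_completion G) (profinite_completion Hgrp)"
proof (rule homI)
  fix x assume "x \<in> carrier (profinite_completion G)"
  then show "Phi x \<in> carrier (profinite_completion Hgrp)"
    using Phi_in_carrier by (simp add: profinite_completion_def)
next
  fix x y assume "x \<in> carrier (profinite_completion G)" "y \<in> carrier (profinite_completion G)"
  then have x: "x \<in> profinite_carrier G" and y: "y \<in> profinite_carrier G"
    by (simp_all add: profinite_completion_def)
  show "Phi (x \<otimes>\<^bsub>profinite_completion G\<^esub> y) = Phi x \<otimes>\<^bsub>profinite_completion Hgrp\<^esub> Phi y"
  proof (rule extensionalityI[OF Phi_extensional])
    show "Phi x \<otimes>\<^bsub>profinite_completion Hgrp\<^esub> Phi y \<in> extensional (fin_index_normals Hgrp)"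
      by (simp add: profinite_completion_def)
    fix N assume "N \<in> fin_index_normals Hgrp"
    then show "Phi (x \<otimes>\<^bsub>profinite_completion G\<^esub> y) N = (Phi x \<otimes>\<^bsub>profinite_completion Hgrp\<^esub> Phi y) N"
      using Phi_mult_apply[OF x y] by (simp add: profinite_completion_def)
  qed
qed

lemma Phi_continuous: "continuous_map (profinite_topology G) (profinite_topology Hgrp) Phi"
  unfolding profinite_topology_def[of Hgrp] continuous_map_in_subtopology
proof (intro conjI)
  show "Phi \<in> topspace (profinite_topology G) \<rightarrow> profinite_carrier Hgrp"
    using Phi_in_carrier by (auto simp: profinite_topology_def profinite_carrier_def)
  show "continuous_map (profinite_topology G)
     (product_topology (\<lambda>N. discrete_topology (rcosets\<^bsub>Hgrp\<^esub> N)) (fin_index_normals Hgrp)) Phi"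
    unfolding continuous_map_componentwise
  proof (intro conjI ballI)
    show "Phi ` topspace (profinite_topology G) \<subseteq> extensional (fin_index_normals Hgrp)"
      using Phi_extensional by blast
    fix N assume N: "N \<in> fin_index_normals Hgrp"
    define n where "n = level N"
    define \<Phi> where "\<Phi> c = N <#> psi n (SOME g. g \<in> c)" for c
    have eq: "(\<lambda>x. Phi x N) = \<Phi> \<circ> (\<lambda>x. x (K n))" using N by (auto simp: Phi_def \<Phi>_def n_def)
    have "continuous_map (profinite_topology G) (discrete_topology (rcosets (K n))) (\<lambda>x. x (K n))"
      unfolding profinite_topology_def
      using continuous_map_from_subtopology[OF continuous_map_product_projection[where X="\<lambda>N. discrete_topology (rcosets N)", OF K_fin_index]]
      by simp
    moreover have "continuous_map (discrete_topology (rcosets (K n))) (discrete_topology (rcosets\<^bsub>Hgrp\<^esub> N)) \<Phi>"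
      unfolding continuous_map_from_discrete_topology
    proof
      fix c assume c: "c \<in> rcosets (K n)"
      have "(SOME g. g \<in> c) \<in> carrier G"
        using some_in_rcoset[OF K_subgroup c] rcosets_subset_carrier[OF K_subgroup c] by blast
      then obtain h where h: "h \<in> H" "psi n (SOME g. g \<in> c) = L n #> h" using psi_rep by blast
      have "\<Phi> c = N #> h" unfolding \<Phi>_def using h H_subset n_def
        set_mult_rcos_absorb[OF L_subgroup fin_index_normals_HgrpD(2)[OF N] L_level_subset[OF N]] by auto
      then show "\<Phi> c \<in> topspace (discrete_topology (rcosets\<^bsub>Hgrp\<^esub> N))"
        using h by (auto simp: rcosets_carrier_update)
    qed
    ultimately show "continuous_map (profinite_topology G) (discrete_topology (rcosets\<^bsub>Hgrp\<^esub> N)) (\<lambda>x. Phi x N)"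
      unfolding eq by (rule continuous_map_compose)
  qed
qed

lemma profinite_carrier_Hgrp_rep:
  assumes "y \<in> profinite_carrier Hgrp" "N \<in> fin_index_normals Hgrp"
  obtains h where "h \<in> H" "y N = N #> h"
  using profinite_carrier_value[OF assms] by (auto simp: rcosets_carrier_update)

lemma profinite_carrier_Hgrp_shift:
  assumes y: "y \<in> profinite_carrier Hgrp" and N: "N \<in> fin_index_normals Hgrp"
    and N': "N' \<in> fin_index_normals Hgrp" and le: "N \<subseteq> N'"
    and h: "h \<in> H" "y N = N #> h"
  shows "y N' = N' #> h"
proof -
  obtain h' where h': "h' \<in> H" "y N' = N' #> h'" using profinite_carrier_Hgrp_rep[OF y N'] .
  have "N #> h \<subseteq> N' #> h'" using profinite_carrier_mono[OF y N N' le] h h' by simp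
  then have "N' #> h = N' #> h'"
    using rcos_subset_imp_eq[OF fin_index_normals_HgrpD(2)[OF N] fin_index_normals_HgrpD(2)[OF N'] le]
      h(1) h'(1) H_subset by blast
  then show ?thesis using h' by simp
qed

definition fibre_cosets :: "('a set \<Rightarrow> 'a set) \<Rightarrow> nat \<Rightarrow> 'a set set" where
  "fibre_cosets y n = {c \<in> rcosets (M n). \<forall>a\<in>c. psi n a = y (L n)}"

lemma psi_const_on_M_coset: "a \<in> carrier G \<Longrightarrow> a' \<in> M n #> a \<Longrightarrow> psi n a' = psi n a"
  using psi_const_on_K_coset M_subset_K unfolding r_coset_def by blast

lemma M_coset_in_fibre_cosets:
  "a \<in> carrier G \<Longrightarrow> psi n a = y (L n) \<Longrightarrow> M n #> a \<in> fibre_cosets y n"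
  unfolding fibre_cosets_def using rcosetsI[OF subgroup.subset[OF M_subgroup]] psi_const_on_M_coset
  by simp

lemma fibre_cosets_nonempty:
  assumes y: "y \<in> profinite_carrier Hgrp"
  shows "fibre_cosets y n \<noteq> {}"
proof -
  have "y (L n) \<in> carrier (Q n)"
    using profinite_carrier_value[OF y L_fin_index] by (simp add: FactGroup_def)
  then obtain a where "a \<in> carrier G" "psi n a = y (L n)" using psi_surj by (metis imageE)
  then show ?thesis using M_coset_in_fibre_cosets by blast
qed

lemma fibre_cosets_proj:
  assumes y: "y \<in> profinite_carrier Hgrp" and c: "c \<in> fibre_cosets y (Suc n)"
  shows "M n <#> c \<in> fibre_cosets y n"
proof -
  obtain a where a: "a \<in> carrier G" "c = M (Suc n) #> a"
    using c unfolding fibre_cosets_def by (auto elim!: rcosetsE)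
  obtain h where h: "h \<in> H" "y (L (Suc n)) = L (Suc n) #> h"
    using profinite_carrier_Hgrp_rep[OF y L_fin_index] .
  have "psi (Suc n) a = y (L (Suc n))"
    using c a rcos_self[OF a(1) M_subgroup] unfolding fibre_cosets_def by blast
  then have "psi n a = L n #> h" using psi_antimono[of n "Suc n" a h] a h by simp
  also have "\<dots> = y (L n)"
    using profinite_carrier_Hgrp_shift[OF y L_fin_index L_fin_index L_antimono h] by simp
  finally have "M n #> a \<in> fibre_cosets y n" using M_coset_in_fibre_cosets[OF a(1)] by blast
  moreover have "M n <#> c = M n #> a"
    using a set_mult_rcos_absorb[OF M_subgroup M_subgroup M_antimono] by simp
  ultimately show ?thesis by simp
qed

lemma coset_thread_exists:
  assumes y: "y \<in> profinite_carrier Hgrp"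
  obtains cs where "\<And>n. cs n \<in> rcosets (M n)" "\<And>n a. a \<in> cs n \<Longrightarrow> psi n a = y (L n)"
    "\<And>n. cs (Suc n) \<subseteq> cs n"
proof -
  have "finite (fibre_cosets y n)" for n
    using fin_index_normalsD(3)[OF M_fin_index] unfolding fibre_cosets_def by simp
  then obtain cs where cs: "\<And>n. cs n \<in> fibre_cosets y n" "\<And>n. M n <#> cs (Suc n) = cs n"
    using koenig_inverse_limit[of "fibre_cosets y" "\<lambda>n c. M n <#> c",
        OF _ fibre_cosets_nonempty[OF y] fibre_cosets_proj[OF y]] by blast
  have "cs (Suc n) \<subseteq> cs n" for n
  proof
    fix z assume z: "z \<in> cs (Suc n)"
    then have "z \<in> carrier G"
      using rcosets_subset_carrier[OF M_subgroup] cs(1) unfolding fibre_cosets_def by blast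
    then have "z = \<one> \<otimes> z" by simp
    then show "z \<in> cs n"
      using z subgroup.one_closed[OF M_subgroup] cs(2)[of n] unfolding set_mult_def by blast
  qed
  moreover have "cs n \<in> rcosets (M n)" "\<And>a. a \<in> cs n \<Longrightarrow> psi n a = y (L n)" for n
    using cs(1)[of n] unfolding fibre_cosets_def by auto
  ultimately show ?thesis using that by blast
qed

lemma coset_thread_in_profinite_carrier:
  assumes cs: "\<And>n. cs n \<in> rcosets (M n)" and dec: "\<And>n. cs (Suc n) \<subseteq> cs n"
  defines "x \<equiv> \<lambda>N\<in>fin_index_normals G. N <#> cs (card (rcosets N))"
  shows "x \<in> profinite_carrier G"
    and "\<And>N a. N \<in> fin_index_normals G \<Longrightarrow> a \<in> cs (card (rcosets N)) \<Longrightarrow> x N = N #> a"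
proof -
  have cs_mono: "cs m \<subseteq> cs n" if "n \<le> m" for n m
    using lift_Suc_antimono_le[of cs, OF dec that] .
  have cs_ne: "\<exists>a. a \<in> cs n" for n using some_in_rcoset[OF M_subgroup cs] by blast
  show x_apply: "x N = N #> a" if N: "N \<in> fin_index_normals G" and a: "a \<in> cs (card (rcosets N))" for N a
  proof -
    have "cs (card (rcosets N)) = M (card (rcosets N)) #> a" "a \<in> carrier G"
      using rcosets_rep[OF M_subgroup cs a] by auto
    then show ?thesis
      unfolding x_def using N M_subset[OF N order_refl]
        set_mult_rcos_absorb[OF M_subgroup fin_index_normalsD(2)[OF N]] by simp
  qed
  show "x \<in> profinite_carrier G" unfolding profinite_carrier_def
  proof (intro CollectI conjI ballI impI)
    show "x \<in> (\<Pi>\<^sub>E N\<in>fin_index_normals G. rcosets N)"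
    proof
      fix N assume N: "N \<in> fin_index_normals G"
      obtain a where a: "a \<in> cs (card (rcosets N))" using cs_ne by blast
      then show "x N \<in> rcosets N"
        using x_apply[OF N a] rcosetsI[OF subgroup.subset[OF fin_index_normalsD(2)[OF N]]]
          rcosets_rep(2)[OF M_subgroup cs a] by simp
    qed (simp add: x_def)
    fix N N' assume N: "N \<in> fin_index_normals G" and N': "N' \<in> fin_index_normals G"
      and le: "N \<subseteq> N'"
    obtain a where a: "a \<in> cs (max (card (rcosets N)) (card (rcosets N')))" using cs_ne by blast
    then have "a \<in> cs (card (rcosets N))" "a \<in> cs (card (rcosets N'))"
      using cs_mono[OF max.cobounded1] cs_mono[OF max.cobounded2] by blast+
    then show "x N \<subseteq> x N'" using x_apply[OF N] x_apply[OF N'] le unfolding r_coset_def by auto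
  qed
qed

lemma Phi_surj: "Phi ` profinite_carrier G = profinite_carrier Hgrp"
proof
  show "Phi ` profinite_carrier G \<subseteq> profinite_carrier Hgrp" using Phi_in_carrier by blast
  show "profinite_carrier Hgrp \<subseteq> Phi ` profinite_carrier G"
  proof
    fix y assume y: "y \<in> profinite_carrier Hgrp"
    obtain cs where cs: "\<And>n. cs n \<in> rcosets (M n)" "\<And>n a. a \<in> cs n \<Longrightarrow> psi n a = y (L n)"
      "\<And>n. cs (Suc n) \<subseteq> cs n"
      using coset_thread_exists[OF y] by blast
    define x where "x = (\<lambda>N\<in>fin_index_normals G. N <#> cs (card (rcosets N)))"
    note x = coset_thread_in_profinite_carrier[OF cs(1,3), folded x_def]
    have "Phi x N = y N" if N: "N \<in> fin_index_normals Hgrp" for N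
    proof -
      define n where "n = level N"
      define m where "m = max n (card (rcosets (K n)))"
      obtain a where a: "a \<in> cs m" using some_in_rcoset[OF M_subgroup cs(1)] by blast
      have a_n: "a \<in> cs n" and a_K: "a \<in> cs (card (rcosets (K n)))"
        using a lift_Suc_antimono_le[of cs, OF cs(3) max.cobounded1]
          lift_Suc_antimono_le[of cs, OF cs(3) max.cobounded2] unfolding m_def by blast+
      have aG: "a \<in> carrier G" using rcosets_rep(2)[OF M_subgroup cs(1) a_n] .
      have "a \<in> x (K n)" using x(2)[OF K_fin_index a_K] rcos_self[OF aG K_subgroup] by simp
      moreover obtain h where h: "h \<in> H" "y (L n) = L n #> h"
        using profinite_carrier_Hgrp_rep[OF y L_fin_index] .
      moreover have "psi n a = L n #> h" using cs(2)[OF a_n] h by simp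
      ultimately have "Phi x N = N #> h" using Phi_apply[OF x(1) N L_level_subset[OF N]] n_def by blast
      also have "\<dots> = y N"
        using profinite_carrier_Hgrp_shift[OF y L_fin_index N L_level_subset[OF N, folded n_def] h]
        by simp
      finally show ?thesis .
    qed
    then have "Phi x = y"
      by (rule extensionalityI[OF Phi_extensional profinite_carrier_extensional[OF y]])
    then show "y \<in> Phi ` profinite_carrier G" using x(1) by blast
  qed
qed

lemma kernel_Phi_coordinate_M:
  assumes x: "x \<in> kernel (profinite_completion G) (profinite_completion Hgrp) Phi"
  shows "x (M n) \<subseteq> K n"
proof -
  have xG: "x \<in> profinite_carrier G" and Phi_x: "Phi x = (\<lambda>N\<in>fin_index_normals Hgrp. N)"
    using x by (auto simp: kernel_def profinite_completion_def)
  note MK = profinite_carrier_mono[OF xG M_fin_index K_fin_index M_subset_K]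
  obtain a where a: "a \<in> x (M n)" using profinite_carrier_nonempty[OF xG M_fin_index] .
  have aK: "a \<in> x (K n)" using a MK by blast
  have aG: "a \<in> carrier G" using profinite_carrier_rep(2)[OF xG M_fin_index a] .
  obtain h where h: "h \<in> H" "psi n a = L n #> h" using psi_rep[OF aG] by blast
  have hG: "h \<in> carrier G" using h H_subset by blast
  have "L n #> h = L n" using Phi_apply[OF xG L_fin_index order_refl aK h] Phi_x L_fin_index by simp
  then have "psi n a = L n" using h(2) coset_join2[OF hG L_subgroup] coset_join1[OF _ hG L_subgroup] by simp
  then have "x (K n) = K n" using K_iff aG profinite_carrier_rep(1)[OF xG K_fin_index aK]
      coset_join2[OF aG K_subgroup] by simp
  with MK show ?thesis by (rule ord_le_eq_trans)
qed

lemma profinite_carrier_eq_if_eq_at_M: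
  assumes x: "x \<in> profinite_carrier G" and x': "x' \<in> profinite_carrier G"
    and eq: "x (M m) = x' (M m)" and N: "N \<in> fin_index_normals G" "card (rcosets N) \<le> m"
  shows "x N = x' N"
proof -
  have MN: "M m \<subseteq> N" using M_subset[OF N] .
  obtain a where a: "a \<in> x (M m)" using profinite_carrier_nonempty[OF x M_fin_index] .
  then have "a \<in> x N" "a \<in> x' N"
    using eq profinite_carrier_mono[OF x M_fin_index N(1) MN]
      profinite_carrier_mono[OF x' M_fin_index N(1) MN] by auto
  then show ?thesis using profinite_carrier_rep(1)[OF x N(1)] profinite_carrier_rep(1)[OF x' N(1)] by metis
qed

lemma exists_M_coordinate_inj:
  assumes S: "finite S" "S \<subseteq> profinite_carrier G"
  shows "\<exists>m. inj_on (\<lambda>x. x (M m)) S"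
proof -
  define sep where "sep x x' = (SOME N. N \<in> fin_index_normals G \<and> x N \<noteq> x' N)"
    for x x' :: "'a set \<Rightarrow> 'a set"
  have sep: "sep x x' \<in> fin_index_normals G \<and> x (sep x x') \<noteq> x' (sep x x')"
    if "x \<in> S" "x' \<in> S" "x \<noteq> x'" for x x'
  proof -
    have "\<exists>N. N \<in> fin_index_normals G \<and> x N \<noteq> x' N"
      using profinite_carrier_neq[of x G x'] that S(2) by blast
    then show ?thesis unfolding sep_def by (rule someI_ex)
  qed
  define m where "m = Max ((\<lambda>(x, x'). card (rcosets (sep x x'))) ` (S \<times> S))"
  have "inj_on (\<lambda>x. x (M m)) S"
  proof (rule inj_onI, rule ccontr)
    fix x x' assume xS: "x \<in> S" "x' \<in> S" and eq: "x (M m) = x' (M m)" and ne: "x \<noteq> x'"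
    have "card (rcosets (sep x x')) \<le> m"
      unfolding m_def using S(1) xS by (intro Max_ge) auto
    then have "x (sep x x') = x' (sep x x')"
      using profinite_carrier_eq_if_eq_at_M[OF _ _ _ conjunct1[OF sep[OF xS ne]], where x=x and x'=x']
        xS S(2) eq by blast
    then show False using sep[OF xS ne] by simp
  qed
  then show ?thesis by blast
qed

text \<open>Finitely many points of the kernel are separated by their \<open>M m\<close>-coordinates for large \<open>m\<close>,
  and these coordinates are among the at most \<open>[G : H]\<close> cosets of \<open>M m\<close> inside \<open>K m\<close>.\<close>
lemma card_kernel_Phi_le:
  "finite (kernel (profinite_completion G) (profinite_completion Hgrp) Phi)
   \<and> card (kernel (profinite_completion G) (profinite_completion Hgrp) Phi) \<le> card (rcosets H)"
proof (rule finite_if_finite_subsets_card_bdd)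
  fix S assume S: "S \<subseteq> kernel (profinite_completion G) (profinite_completion Hgrp) Phi" "finite S"
  have SG: "S \<subseteq> profinite_carrier G" using S(1) by (auto simp: kernel_def profinite_completion_def)
  obtain m where inj: "inj_on (\<lambda>x. x (M m)) S" using exists_M_coordinate_inj[OF S(2) SG] by blast
  have img: "(\<lambda>x. x (M m)) ` S \<subseteq> {c \<in> rcosets (M m). c \<subseteq> K m}"
    using profinite_carrier_value[OF _ M_fin_index] kernel_Phi_coordinate_M S(1) SG by blast
  have "finite {c \<in> rcosets (M m). c \<subseteq> K m}"
    using fin_index_normalsD(3)[OF M_fin_index] by simp
  then have "card S \<le> card {c \<in> rcosets (M m). c \<subseteq> K m}" by (rule card_inj_on_le[OF inj img])
  then show "card S \<le> card (rcosets H)" using card_M_cosets_in_K_le[of m] by linarith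
qed

end

theorem propositionC:
  fixes G :: "('a, 'b) monoid_scheme" and H :: "'a set"
  assumes "group G"
    and "fin_generated G"
    and "residually_finite G"
    and "subgroup H G"
    and "finite (rcosets\<^bsub>G\<^esub> H)"
    and "\<forall>N\<in>fin_index_normals (G\<lparr>carrier := H\<rparr>).
           \<exists>M\<in>fin_index_normals G. (G\<lparr>carrier := H\<rparr> Mod N) \<cong> (G Mod M)"
  shows "\<exists>f. f \<in> hom (profinite_completion G) (profinite_completion (G\<lparr>carrier := H\<rparr>))
           \<and> f ` carrier (profinite_completion G) = carrier (profinite_completion (G\<lparr>carrier := H\<rparr>))
           \<and> continuous_map (profinite_topology G) (profinite_topology (G\<lparr>carrier := H\<rparr>)) f
           \<and> finite (kernel (profinite_completion G) (profinite_completion (G\<lparr>carrier := H\<rparr>)) f)"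
proof -
  interpret quotient_inheriting_subgroup G H
    using assms by (simp add: quotient_inheriting_subgroup_def quotient_inheriting_subgroup_axioms_def)
  show ?thesis
  proof (intro exI conjI)
    show "Phi \<in> hom (profinite_completion G) (profinite_completion Hgrp)" by (rule Phi_hom)
    show "Phi ` carrier (profinite_completion G) = carrier (profinite_completion Hgrp)"
      using Phi_surj by (simp add: profinite_completion_def)
    show "continuous_map (profinite_topology G) (profinite_topology Hgrp) Phi" by (rule Phi_continuous)
    show "finite (kernel (profinite_completion G) (profinite_completion Hgrp) Phi)"
      using card_kernel_Phi_le by blast
  qed
qed

end
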